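(* In the standing setting below, let $X_i=(x_i,u_i)\in\mathbb{X}\times\mathbb{R}$ for $i=0,1$. Then for every $x\in\mathbb{X}$, $$F_{X_0X_1}(x)=\sup\Big(\bigcup_{i=0,1}\{-c(x,y)+c(x_i,y)+u_i:\ y\in\mathbb{Y},\ -c(x_{i+1},y)+c(x_i,y)+u_i\le u_{i+1}\}\Big),$$ where indices are taken modulo 2 (so $x_{1+1}=x_0$, $u_{1+1}=u_0$).
   Context: Standing setting: $\mathbb{X},\mathbb{Y}\subset\mathbb{R}^n$ are compact with non-empty interior; $c:\mathbb{X}\times\mathbb{Y}\to\mathbb{R}$ has continuous $D_xc$, $D_yc$, and continuous mixed second derivatives with $D^2_{xy}c=(D^2_{yx}c)^T$; for each $x$ the map $y\mapsto -D_xc(x,y)$ is injective on $\mathbb{Y}$ and for each $y$ the map $x\mapsto -D_yc(x,y)$ is injective on $\mathbb{X}$; $D^2_{xy}c(x,y)$ is invertible everywhere; for every $y$ the set $\{-D_yc(x,y):x\in\mathbb{X}\}$ is convex and for every $x$ the set $\{-D_xc(x,y):y\in\mathbb{Y}\}$ is convex. $c$-chord: for $X_i=(x_i,u_i)\in\mathbb{X}\times\mathbb{R}$, $F_{X_0X_1}(x)=\sup\{-c(x,y)+h: y\in\mathbb{Y},h\in\mathbb{R},-c(x_i,y)+h\le u_i, i=0,1\}$. *)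

theory Defs
  imports "HOL-Analysis.Analysis"
begin

definition standing_setting ::
  "(real^'n) set \<Rightarrow> (real^'n) set \<Rightarrow> (real^'n \<Rightarrow> real^'n \<Rightarrow> real) \<Rightarrow> bool" where
  "standing_setting X Y c \<longleftrightarrow>
     compact X \<and> compact Y \<and> interior X \<noteq> {} \<and> interior Y \<noteq> {} \<and>
     (\<exists>(Dx :: real^'n \<Rightarrow> real^'n \<Rightarrow> real^'n) (Dy :: real^'n \<Rightarrow> real^'n \<Rightarrow> real^'n)
        (Dxy :: real^'n \<Rightarrow> real^'n \<Rightarrow> real^'n^'n) (Dyx :: real^'n \<Rightarrow> real^'n \<Rightarrow> real^'n^'n).
       (\<forall>x\<in>X. \<forall>y\<in>Y. ((\<lambda>x'. c x' y) has_derivative (\<lambda>h. Dx x y \<bullet> h)) (at x within X)) \<and>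
       (\<forall>x\<in>X. \<forall>y\<in>Y. ((\<lambda>y'. c x y') has_derivative (\<lambda>k. Dy x y \<bullet> k)) (at y within Y)) \<and>
       continuous_on (X \<times> Y) (\<lambda>(x, y). Dx x y) \<and>
       continuous_on (X \<times> Y) (\<lambda>(x, y). Dy x y) \<and>
       (\<forall>x\<in>X. \<forall>y\<in>Y. ((\<lambda>y'. Dx x y') has_derivative (\<lambda>k. Dxy x y *v k)) (at y within Y)) \<and>
       (\<forall>x\<in>X. \<forall>y\<in>Y. ((\<lambda>x'. Dy x' y) has_derivative (\<lambda>h. Dyx x y *v h)) (at x within X)) \<and>
       continuous_on (X \<times> Y) (\<lambda>(x, y). Dxy x y) \<and>
       continuous_on (X \<times> Y) (\<lambda>(x, y). Dyx x y) \<and>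
       (\<forall>x\<in>X. \<forall>y\<in>Y. Dxy x y = transpose (Dyx x y)) \<and>
       (\<forall>x\<in>X. inj_on (\<lambda>y. - Dx x y) Y) \<and>
       (\<forall>y\<in>Y. inj_on (\<lambda>x. - Dy x y) X) \<and>
       (\<forall>x\<in>X. \<forall>y\<in>Y. invertible (Dxy x y)) \<and>
       (\<forall>y\<in>Y. convex ((\<lambda>x. - Dy x y) ` X)) \<and>
       (\<forall>x\<in>X. convex ((\<lambda>y. - Dx x y) ` Y)))"

definition c_chord ::
  "(real^'n) set \<Rightarrow> (real^'n \<Rightarrow> real^'n \<Rightarrow> real) \<Rightarrow> real^'n \<Rightarrow> real \<Rightarrow> real^'n \<Rightarrow> real
     \<Rightarrow> real^'n \<Rightarrow> real" where
  "c_chord Y c x0 u0 x1 u1 x =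
     Sup {- c x y + h | y h. y \<in> Y \<and> - c x0 y + h \<le> u0 \<and> - c x1 y + h \<le> u1}"

end

theory Submission
  imports Defs
begin

text \<open>For fixed \<open>y\<close> the admissible heights are exactly \<open>h \<le> min (c x0 y + u0) (c x1 y + u1)\<close>,
so the chord is the supremum of \<open>min (c x0 y + u0) (c x1 y + u1) - c x y\<close> over \<open>y \<in> Y\<close>; the
minimum is the first term precisely when the constraint at \<open>x1\<close> holds for it, and the
second term precisely when the constraint at \<open>x0\<close> holds.\<close>

text \<open>Stated without boundedness or non-emptiness: the real \<open>Sup\<close> is the least upper bound
by definition, so it only depends on the set of upper bounds, junk values included.\<close>

lemma Sup_real_eq_cofinal_subset:
  fixes S T :: "real set"
  assumes "T \<subseteq> S" and "\<And>s. s \<in> S \<Longrightarrow> \<exists>t\<in>T. s \<le> t"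
  shows "Sup S = Sup T"
proof -
  have "(\<forall>s\<in>S. s \<le> z) \<longleftrightarrow> (\<forall>t\<in>T. t \<le> z)" for z
    using assms by (meson order_trans subsetD)
  then show ?thesis
    unfolding Sup_real_def by simp
qed

lemma c_chord_eq_Sup_min:
  "c_chord Y c x0 u0 x1 u1 x = Sup {min (c x0 y + u0) (c x1 y + u1) - c x y | y. y \<in> Y}"
  unfolding c_chord_def
proof (rule Sup_real_eq_cofinal_subset)
  show "{min (c x0 y + u0) (c x1 y + u1) - c x y | y. y \<in> Y}
      \<subseteq> {- c x y + h | y h. y \<in> Y \<and> - c x0 y + h \<le> u0 \<and> - c x1 y + h \<le> u1}"
    by (force simp: min_def)
  show "\<exists>t\<in>{min (c x0 y + u0) (c x1 y + u1) - c x y | y. y \<in> Y}. s \<le> t"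
    if "s \<in> {- c x y + h | y h. y \<in> Y \<and> - c x0 y + h \<le> u0 \<and> - c x1 y + h \<le> u1}" for s
    using that by fastforce
qed

lemma Collect_min_eq_Un:
  fixes a b :: "'a \<Rightarrow> real"
  shows "{min (a y) (b y) | y. y \<in> Y} = {a y | y. y \<in> Y \<and> a y \<le> b y} \<union> {b y | y. y \<in> Y \<and> b y \<le> a y}"
  by (auto simp: min_def) (metis nle_le)

theorem lemma3p3:
  fixes X Y :: "(real^'n) set" and c :: "real^'n \<Rightarrow> real^'n \<Rightarrow> real"
    and x0 x1 x :: "real^'n" and u0 u1 :: real
  assumes "standing_setting X Y c"
    and "x0 \<in> X" and "x1 \<in> X" and "x \<in> X"
  shows "c_chord Y c x0 u0 x1 u1 x =
    Sup ({- c x y + c x0 y + u0 | y. y \<in> Y \<and> - c x1 y + c x0 y + u0 \<le> u1}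
       \<union> {- c x y + c x1 y + u1 | y. y \<in> Y \<and> - c x0 y + c x1 y + u1 \<le> u0})"
proof -
  have "{min (c x0 y + u0) (c x1 y + u1) - c x y | y. y \<in> Y}
      = {min (c x0 y + u0 - c x y) (c x1 y + u1 - c x y) | y. y \<in> Y}"
    by (simp add: min_diff_distrib_left)
  also have "\<dots> = {- c x y + c x0 y + u0 | y. y \<in> Y \<and> - c x1 y + c x0 y + u0 \<le> u1}
       \<union> {- c x y + c x1 y + u1 | y. y \<in> Y \<and> - c x0 y + c x1 y + u1 \<le> u0}"
    unfolding Collect_min_eq_Un by (auto simp: algebra_simps)
  finally show ?thesis
    by (simp add: c_chord_eq_Sup_min)
qed

end
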